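(* Let $\mathcal{A}$ be a separating union-closed family with base set $[n]$, height $h$, and $h=|\mathcal{B}(\mathcal{A})|=4$. Then \[\mathrm{Avg}(\mathcal{A}) = \frac{\sum_{A\in\mathcal{A}}|A|}{|\mathcal{A}|} > \Big\lfloor \frac{n}{2} \Big\rfloor - 1.\]
   Context: A family of sets $\mathcal{A}$ is union-closed if it is a finite family of distinct finite sets with at least one nonempty member set, and $X,Y\in\mathcal{A}$ implies $X\cup Y\in\mathcal{A}$ (the empty set may be a member). For a family $\mathcal{F}$, $b(\mathcal{F})=\bigcup_{F\in\mathcal{F}}F$; the base set $b(\mathcal{A})$ is denoted $[n]=\{1,\dots,n\}$. $\mathcal{A}$ is separating if for any two distinct $x,y\in[n]$ there is $A\in\mathcal{A}$ containing exactly one of $x,y$. A chain in $\mathcal{A}$ is a subfamily any two distinct members of which are comparable under proper inclusion; the height $h$ of $\mathcal{A}$ is the maximum size of a chain in $\mathcal{A}$. For real $x\ge 0$, $\mathcal{A}_{<x}=\{A\in\mathcal{A} : |A|<x\}$. For $\mathcal{S}\subseteq\mathcal{A}$ and $S\in\mathcal{S}$, $\mathrm{irr}_{\mathcal{S}}(S)=\{s\in S : s\notin b(\mathcal{S}\setminus\{S\})\}$, and $\mathcal{S}$ is irredundant if $\mathrm{irr}_{\mathcal{S}}(S)\neq\emptyset$ for every $S\in\mathcal{S}$. Set $B=b(\mathcal{A}_{<n/2})$, and let $\mathcal{B}(\mathcal{A})$ denote any irredundant subfamily of $\mathcal{A}_{<n/2}$ of minimum size such that $b(\mathcal{B}(\mathcal{A}))=B$.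 *)

theory Defs
  imports Complex_Main
begin

definition base :: "nat set set \<Rightarrow> nat set" where
  "base F = \<Union>F"

definition union_closed :: "nat set set \<Rightarrow> bool" where
  "union_closed \<A> \<longleftrightarrow> finite \<A> \<and> (\<forall>X\<in>\<A>. finite X) \<and> (\<exists>X\<in>\<A>. X \<noteq> {}) \<and>
     (\<forall>X\<in>\<A>. \<forall>Y\<in>\<A>. X \<union> Y \<in> \<A>)"

definition separating :: "nat set set \<Rightarrow> nat \<Rightarrow> bool" where
  "separating \<A> n \<longleftrightarrow> (\<forall>x\<in>{1..n}. \<forall>y\<in>{1..n}. x \<noteq> y \<longrightarrow>
     (\<exists>A\<in>\<A>. (x \<in> A \<and> y \<notin> A) \<or> (y \<in> A \<and> x \<notin> A)))"

definition is_chain :: "nat set set \<Rightarrow> nat set set \<Rightarrow> bool" where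
  "is_chain \<A> C \<longleftrightarrow> C \<subseteq> \<A> \<and> (\<forall>X\<in>C. \<forall>Y\<in>C. X \<noteq> Y \<longrightarrow> X \<subset> Y \<or> Y \<subset> X)"

definition height :: "nat set set \<Rightarrow> nat" where
  "height \<A> = Max {card C | C. is_chain \<A> C}"

definition below :: "nat set set \<Rightarrow> real \<Rightarrow> nat set set" where
  "below \<A> x = {A \<in> \<A>. real (card A) < x}"

definition irr :: "nat set set \<Rightarrow> nat set \<Rightarrow> nat set" where
  "irr S X = {s \<in> X. s \<notin> base (S - {X})}"

definition irredundant :: "nat set set \<Rightarrow> bool" where
  "irredundant S \<longleftrightarrow> (\<forall>X\<in>S. irr S X \<noteq> {})"

definition B_candidate :: "nat set set \<Rightarrow> nat \<Rightarrow> nat set set \<Rightarrow> bool" where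
  "B_candidate \<A> n S \<longleftrightarrow> S \<subseteq> below \<A> (real n / 2) \<and> irredundant S \<and>
     base S = base (below \<A> (real n / 2))"

text \<open>S is a choice of B(A): a candidate of minimum size.\<close>
definition is_BA :: "nat set set \<Rightarrow> nat \<Rightarrow> nat set set \<Rightarrow> bool" where
  "is_BA \<A> n S \<longleftrightarrow> B_candidate \<A> n S \<and> (\<forall>S'. B_candidate \<A> n S' \<longrightarrow> card S \<le> card S')"

definition avg :: "nat set set \<Rightarrow> real" where
  "avg \<A> = (\<Sum>A\<in>\<A>. real (card A)) / real (card \<A>)"

end

theory Submission
  imports Defs
begin

(* Let f = n div 2 and call a member small if it has fewer than n/2 elements. As [n] is a
   member and the height is 4, no four members other than [n] form a chain. Hence the
   irredundant family B(A) covers [n], and by minimality of |B(A)| = 4 no three small sets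
   cover [n]. It follows that small sets are minimal members, that S1 \<union> S is not small for
   distinct small S1, S, and that small sets S, S' with S1 \<union> S = S1 \<union> S' satisfy
   S \<union> S' = S1 \<union> S.
   It suffices that the surpluses |X| - (f - 1) of the members have a positive sum. Fix a
   member S1 of negative surplus and group the other ones S by Y = S1 \<union> S. Within a group
   the sets Y - S are disjoint subsets of S1, so a group together with Y has surplus at
   least 2 (|Y| - f + 1) - |S1|; as A is separating, this is negative for at most one Y.
   Adding the surpluses of [n] and S1 gives a positive total. *)

lemma chain_length_le_height:
  assumes "finite \<A>" and "set Xs \<subseteq> \<A>" and "sorted_wrt (\<subset>) Xs"
  shows "length Xs \<le> height \<A>"
proof -
  have "distinct Xs" using assms(3) by (induction Xs) auto
  then have len: "length Xs = card (set Xs)" by (simp add: distinct_card)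
  have "is_chain \<A> (set Xs)"
    using assms(2,3) by (induction Xs) (auto simp: is_chain_def)
  moreover have "finite {card C | C. is_chain \<A> C}"
    by (rule finite_subset[of _ "{..card \<A>}"])
      (use assms(1) in \<open>auto simp: is_chain_def intro: card_mono\<close>)
  ultimately show ?thesis unfolding len height_def by (auto intro: Max_ge)
qed

lemma union_closed_Union_mem:
  assumes "union_closed \<A>" and "finite \<F>" and "\<F> \<noteq> {}" and "\<F> \<subseteq> \<A>"
  shows "\<Union>\<F> \<in> \<A>"
  using assms(2-4)
  by (induction \<F> rule: finite_ne_induct) (use assms(1) in \<open>auto simp: union_closed_def\<close>)

lemma irredundant_subset:
  assumes "irredundant \<F>" and "\<G> \<subseteq> \<F>"
  shows "irredundant \<G>"
proof -
  have "irr \<F> X \<subseteq> irr \<G> X" for X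
    using assms(2) by (auto simp: irr_def base_def)
  then show ?thesis using assms unfolding irredundant_def by blast
qed

lemma irredundant_subfamily_exists:
  assumes "finite \<F>"
  shows "\<exists>\<F>'\<subseteq>\<F>. irredundant \<F>' \<and> \<Union>\<F>' = \<Union>\<F>"
  using assms
proof (induction "card \<F>" arbitrary: \<F> rule: less_induct)
  case less
  show ?case
  proof (cases "irredundant \<F>")
    case True
    then show ?thesis by blast
  next
    case False
    then obtain X where X: "X \<in> \<F>" "irr \<F> X = {}" unfolding irredundant_def by blast
    then have "X \<subseteq> \<Union>(\<F> - {X})" unfolding irr_def base_def by blast
    then have same_Union: "\<Union>(\<F> - {X}) = \<Union>\<F>" using X(1) by blast
    have "card (\<F> - {X}) < card \<F>" using less.prems X(1) by (rule card_Diff1_less)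
    then obtain \<F>' where "\<F>' \<subseteq> \<F> - {X}" "irredundant \<F>'" "\<Union>\<F>' = \<Union>(\<F> - {X})"
      using less.hyps less.prems by (metis finite_Diff)
    then show ?thesis using same_Union by (intro exI[of _ \<F>']) auto
  qed
qed

text \<open>The chain consists of the unions of the first \<open>k\<close> members, \<open>1 \<le> k \<le> |\<F>|\<close>.\<close>
lemma irredundant_union_chain:
  assumes "union_closed \<A>" and "finite \<F>" and "\<F> \<noteq> {}" and "\<F> \<subseteq> \<A>" and "irredundant \<F>"
  shows "\<exists>Xs. length Xs = card \<F> \<and> sorted_wrt (\<subset>) Xs \<and> set Xs \<subseteq> \<A> \<and>
    (\<forall>X\<in>set Xs. X \<subseteq> \<Union>\<F>)"
  using assms(2-5)
proof (induction \<F> rule: finite_ne_induct)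
  case (singleton X)
  then show ?case by (intro exI[of _ "[X]"]) auto
next
  case (insert X \<F>)
  obtain Xs where Xs: "length Xs = card \<F>" "sorted_wrt (\<subset>) Xs" "set Xs \<subseteq> \<A>"
    "\<forall>Y\<in>set Xs. Y \<subseteq> \<Union>\<F>"
    using insert irredundant_subset[OF insert.prems(2)] by blast
  have "insert X \<F> - {X} = \<F>" using insert.hyps(3) by blast
  then have "irr (insert X \<F>) X = X - \<Union>\<F>" by (auto simp: irr_def base_def)
  moreover have "irr (insert X \<F>) X \<noteq> {}" using insert.prems(2) unfolding irredundant_def by blast
  ultimately have grow: "\<Union>\<F> \<subset> X \<union> \<Union>\<F>" by blast
  have "X \<union> \<Union>\<F> \<in> \<A>"
    using union_closed_Union_mem[OF assms(1) insert.hyps(1,2)] insert.prems(1) assms(1)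
    by (auto simp: union_closed_def)
  then show ?case using Xs grow insert.hyps
    by (intro exI[of _ "Xs @ [X \<union> \<Union>\<F>]"]) (auto simp: sorted_wrt_append)
qed

lemma separating_card_outside_le_1:
  assumes "separating \<A> n" and "\<And>X. X \<in> \<A> \<Longrightarrow> X \<subseteq> U \<or> {1..n} \<subseteq> U \<union> X"
  shows "card ({1..n} - U) \<le> 1"
proof -
  have "x = y" if x: "x \<in> {1..n} - U" and y: "y \<in> {1..n} - U" for x y
  proof (rule ccontr)
    assume "x \<noteq> y"
    then obtain X where X: "X \<in> \<A>" "x \<in> X \<and> y \<notin> X \<or> y \<in> X \<and> x \<notin> X"
      using assms(1) x y unfolding separating_def by blast
    from assms(2)[OF X(1)] show False
    proof
      assume "X \<subseteq> U"
      then show False using X(2) x y by blast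
    next
      assume "{1..n} \<subseteq> U \<union> X"
      then show False using X(2) x y by blast
    qed
  qed
  then show ?thesis by (simp add: card_le_Suc0_iff_eq)
qed

lemma avg_gt_iff_sum_pos:
  assumes "finite \<A>" and "\<A> \<noteq> {}"
  shows "c < avg \<A> \<longleftrightarrow> 0 < (\<Sum>X\<in>\<A>. real (card X) - c)"
proof -
  have "0 < real (card \<A>)" using assms by (simp add: card_gt_0_iff)
  then show ?thesis
    by (simp add: avg_def sum_subtractf pos_less_divide_eq algebra_simps)
qed

lemma sum_ge_if_one_negative:
  fixes g :: "'a \<Rightarrow> 'b::linordered_ab_group_add"
  assumes "finite I" and "m \<le> 0" and "\<And>i. i \<in> I \<Longrightarrow> m \<le> g i"
    and "\<And>i j. i \<in> I \<Longrightarrow> j \<in> I \<Longrightarrow> g i < 0 \<Longrightarrow> g j < 0 \<Longrightarrow> i = j"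
  shows "m \<le> sum g I"
proof (cases "\<exists>i\<in>I. g i < 0")
  case True
  then obtain i where i: "i \<in> I" "g i < 0" by blast
  have "0 \<le> sum g (I - {i})"
    using assms(4)[OF i(1) _ i(2)] by (intro sum_nonneg) (metis DiffE insertI1 not_less)
  then show ?thesis using assms(3)[OF i(1)] sum.remove[OF assms(1) i(1), of g]
    by (simp add: add_increasing2)
next
  case False
  then have "0 \<le> sum g I" by (intro sum_nonneg) (simp add: not_less)
  then show ?thesis using assms(2) by simp
qed

locale height_four_family =
  fixes \<A> :: "nat set set" and n :: nat and \<B> :: "nat set set"
  assumes union_closed: "union_closed \<A>"
    and base_eq: "base \<A> = {1..n}"
    and separating: "separating \<A> n"
    and height_eq: "height \<A> = 4"
    and is_BA: "is_BA \<A> n \<B>"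
    and card_B: "card \<B> = 4"
begin

lemma finite_family: "finite \<A>"
  using union_closed unfolding union_closed_def by blast

lemma Un_mem: "X \<in> \<A> \<Longrightarrow> Y \<in> \<A> \<Longrightarrow> X \<union> Y \<in> \<A>"
  using union_closed unfolding union_closed_def by blast

lemma mem_subset: "X \<in> \<A> \<Longrightarrow> X \<subseteq> {1..n}"
  using base_eq unfolding base_def by blast

lemma finite_mem: "X \<in> \<A> \<Longrightarrow> finite X"
  using union_closed unfolding union_closed_def by blast

lemma top_mem: "{1..n} \<in> \<A>"
proof -
  have "\<A> \<noteq> {}" using union_closed unfolding union_closed_def by blast
  then show ?thesis
    using union_closed_Union_mem[OF union_closed finite_family] base_eq by (simp add: base_def)
qed

lemma proper_chain_length_le:
  assumes "set Xs \<subseteq> \<A> - {{1..n}}" and "sorted_wrt (\<subset>) Xs"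
  shows "length Xs \<le> 3"
proof -
  have "sorted_wrt (\<subset>) (Xs @ [{1..n}])"
    using assms mem_subset by (auto simp: sorted_wrt_append)
  then have "length (Xs @ [{1..n}]) \<le> height \<A>"
    using assms(1) top_mem by (intro chain_length_le_height[OF finite_family]) auto
  then show ?thesis using height_eq by simp
qed

lemma no_proper_chain4:
  assumes "X1 \<subset> X2" "X2 \<subset> X3" "X3 \<subset> X4"
    and "X1 \<in> \<A>" "X2 \<in> \<A>" "X3 \<in> \<A>" "X4 \<in> \<A>" and "X4 \<noteq> {1..n}"
  shows False
proof -
  have "X1 \<noteq> {1..n}" "X2 \<noteq> {1..n}" "X3 \<noteq> {1..n}"
    using assms mem_subset[of X4] by blast+
  then show False
    using proper_chain_length_le[of "[X1, X2, X3, X4]"] assms by (auto simp: sorted_wrt2)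
qed

definition small :: "nat set \<Rightarrow> bool" where
  "small X \<longleftrightarrow> X \<in> \<A> \<and> 2 * card X < n"

lemma small_mem: "small X \<Longrightarrow> X \<in> \<A>"
  unfolding small_def by blast

lemma below_half_eq: "below \<A> (real n / 2) = Collect small"
  unfolding below_def small_def by auto

lemma B_candidate_B: "B_candidate \<A> n \<B>"
  using is_BA unfolding is_BA_def by blast

lemma small_of_B: "X \<in> \<B> \<Longrightarrow> small X"
  using B_candidate_B below_half_eq unfolding B_candidate_def by blast

text \<open>A gap between the union of \<open>\<B>\<close> and the top would extend the chain of partial
  unions of \<open>\<B>\<close> to five members.\<close>
lemma Union_B: "\<Union>\<B> = {1..n}"
proof (rule ccontr)
  assume gap: "\<Union>\<B> \<noteq> {1..n}"
  have "finite \<B>" "\<B> \<noteq> {}" using card_B by (auto intro: card_ge_0_finite)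
  moreover have "\<B> \<subseteq> \<A>" "irredundant \<B>"
    using small_of_B small_mem B_candidate_B unfolding B_candidate_def by auto
  ultimately obtain Xs where Xs: "length Xs = 4" "sorted_wrt (\<subset>) Xs" "set Xs \<subseteq> \<A>"
    "\<forall>X\<in>set Xs. X \<subseteq> \<Union>\<B>"
    using irredundant_union_chain[OF union_closed] card_B by metis
  have "\<Union>\<B> \<subseteq> {1..n}" using \<open>\<B> \<subseteq> \<A>\<close> mem_subset by blast
  then have "set Xs \<subseteq> \<A> - {{1..n}}" using Xs(3,4) gap by blast
  then show False using proper_chain_length_le Xs(1,2) by fastforce
qed

lemma card_small_cover_ge:
  assumes "finite \<F>" and "\<F> \<subseteq> Collect small" and "\<Union>\<F> = {1..n}"
  shows "4 \<le> card \<F>"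
proof -
  obtain \<F>' where \<F>': "\<F>' \<subseteq> \<F>" "irredundant \<F>'" "\<Union>\<F>' = \<Union>\<F>"
    using irredundant_subfamily_exists[OF assms(1)] by blast
  have "\<Union>(Collect small) = {1..n}"
    using Union_B small_of_B small_mem mem_subset by blast
  then have "B_candidate \<A> n \<F>'"
    using \<F>' assms(2,3) unfolding B_candidate_def below_half_eq base_def by auto
  then have "card \<B> \<le> card \<F>'" using is_BA unfolding is_BA_def by blast
  also have "\<dots> \<le> card \<F>" using \<F>'(1) assms(1) by (rule card_mono[rotated])
  finally show ?thesis using card_B by simp
qed

lemma small_Un3_ne_top:
  assumes "small X" "small Y" "small Z"
  shows "X \<union> Y \<union> Z \<noteq> {1..n}"
proof
  assume "X \<union> Y \<union> Z = {1..n}"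
  then have "4 \<le> card {X, Y, Z}"
    using assms by (intro card_small_cover_ge) (auto simp: Un_assoc)
  moreover have "card {X, Y, Z} \<le> 3" by (simp add: card_insert_if)
  ultimately show False by simp
qed

lemma small_not_subset_exists:
  assumes "Y \<subseteq> {1..n}" and "Y \<noteq> {1..n}"
  shows "\<exists>S. small S \<and> \<not> S \<subseteq> Y"
proof -
  obtain x where x: "x \<in> {1..n}" "x \<notin> Y" using assms by blast
  then obtain S where "S \<in> \<B>" "x \<in> S" using Union_B by blast
  then show ?thesis using small_of_B x(2) by blast
qed

lemma proper_superset_Un_small:
  assumes "small S" "small T"
  shows "\<exists>Z\<in>\<A>. S \<union> T \<subset> Z \<and> Z \<noteq> {1..n}"
proof -
  have "S \<union> T \<in> \<A>" using assms small_mem Un_mem by blast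
  moreover have "S \<union> T \<noteq> {1..n}" using small_Un3_ne_top[OF assms assms(2)] by simp
  ultimately obtain R where R: "small R" "\<not> R \<subseteq> S \<union> T"
    using small_not_subset_exists[OF mem_subset] by blast
  have "S \<union> T \<union> R \<in> \<A>" using \<open>S \<union> T \<in> \<A>\<close> R(1) small_mem Un_mem by blast
  moreover have "S \<union> T \<union> R \<noteq> {1..n}" using small_Un3_ne_top[OF assms R(1)] .
  ultimately show ?thesis using R(2) by blast
qed

lemma small_minimal:
  assumes "small S" and "X \<in> \<A>"
  shows "\<not> X \<subset> S"
proof
  assume "X \<subset> S"
  have S: "S \<in> \<A>" "S \<noteq> {1..n}"
    using small_mem[OF assms(1)] small_Un3_ne_top[OF assms(1) assms(1) assms(1)] by simp_all
  then obtain T where T: "small T" "\<not> T \<subseteq> S"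
    using small_not_subset_exists[OF mem_subset] by blast
  obtain Z where Z: "Z \<in> \<A>" "S \<union> T \<subset> Z" "Z \<noteq> {1..n}"
    using proper_superset_Un_small[OF assms(1) T(1)] by blast
  have "S \<subset> S \<union> T" using T(2) by blast
  moreover have "S \<union> T \<in> \<A>" using Un_mem[OF S(1) small_mem[OF T(1)]] .
  ultimately show False
    using no_proper_chain4[OF \<open>X \<subset> S\<close> _ Z(2) assms(2) S(1) _ Z(1,3)] by blast
qed

lemma small_psubset_Un:
  assumes "small S" "small T" "T \<noteq> S"
  shows "S \<subset> S \<union> T"
  using small_minimal[OF assms(1) small_mem[OF assms(2)]] assms(3) by blast

lemma Un_small_not_small:
  assumes "small S" "small T" "T \<noteq> S"
  shows "\<not> small (S \<union> T)"
proof
  assume "small (S \<union> T)"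
  then show False
    using small_minimal[OF _ small_mem[OF assms(1)]] small_psubset_Un[OF assms] by blast
qed

text \<open>Otherwise \<open>S \<subset> S \<union> S' \<subset> S\<^sub>1 \<union> S\<close> would start a proper chain of length four.\<close>
lemma Un_small_eq_Un:
  assumes "small S\<^sub>1" "small S" "small S'" "S \<noteq> S'" and "S\<^sub>1 \<union> S = S\<^sub>1 \<union> S'"
  shows "S \<union> S' = S\<^sub>1 \<union> S"
proof (rule ccontr)
  assume "S \<union> S' \<noteq> S\<^sub>1 \<union> S"
  then have lower: "S \<union> S' \<subset> S\<^sub>1 \<union> S" using assms(5) by blast
  have bottom: "S \<subset> S \<union> S'" using small_psubset_Un[OF assms(2,3)] assms(4) by blast
  obtain Z where Z: "Z \<in> \<A>" "S\<^sub>1 \<union> S \<subset> Z" "Z \<noteq> {1..n}"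
    using proper_superset_Un_small[OF assms(1,2)] by blast
  have "S \<in> \<A>" "S \<union> S' \<in> \<A>" "S\<^sub>1 \<union> S \<in> \<A>"
    using assms(1-3) small_mem Un_mem by blast+
  then show False using no_proper_chain4[OF bottom lower Z(2) _ _ _ Z(1,3)] by blast
qed

text \<open>Any member not inside \<open>U\<close> and not completing \<open>U\<close> to the top would extend the proper
  chain \<open>S\<^sub>1 \<subset> Y \<subset> U\<close>; separation then leaves at most one point outside \<open>U\<close>.\<close>
lemma card_Un_small_pair_ge:
  assumes "small S\<^sub>1" "small S" "small S'" "S \<noteq> S\<^sub>1" "S' \<noteq> S\<^sub>1"
    and "S\<^sub>1 \<union> S \<noteq> S\<^sub>1 \<union> S'"
  shows "n \<le> card (S\<^sub>1 \<union> S \<union> S') + 1"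
proof -
  define U where "U = S\<^sub>1 \<union> S \<union> S'"
  have U: "U \<in> \<A>" unfolding U_def using assms(1-3) small_mem Un_mem by blast
  have "U \<subseteq> {1..n}" using mem_subset[OF U] .
  have S\<^sub>1: "S\<^sub>1 \<subset> S\<^sub>1 \<union> S" "S\<^sub>1 \<subset> S\<^sub>1 \<union> S'"
    using small_psubset_Un[OF assms(1,2,4)] small_psubset_Un[OF assms(1,3,5)] by blast+
  have mem: "S\<^sub>1 \<union> S \<in> \<A>" "S\<^sub>1 \<union> S' \<in> \<A>"
    using assms(1-3) small_mem Un_mem by blast+
  have "S\<^sub>1 \<union> S \<subset> U \<or> S\<^sub>1 \<union> S' \<subset> U" using assms(6) unfolding U_def by blast
  then obtain Y where Y: "Y \<in> \<A>" "S\<^sub>1 \<subset> Y" "Y \<subset> U"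
    using S\<^sub>1 mem by blast
  have "X \<subseteq> U \<or> {1..n} \<subseteq> U \<union> X" if "X \<in> \<A>" for X
  proof (rule ccontr)
    assume "\<not> (X \<subseteq> U \<or> {1..n} \<subseteq> U \<union> X)"
    then have "U \<subset> U \<union> X" "U \<union> X \<noteq> {1..n}" by blast+
    then show False
      using no_proper_chain4[OF Y(2,3) _ small_mem[OF assms(1)] Y(1) U Un_mem[OF U that]]
      by blast
  qed
  then have "card ({1..n} - U) \<le> 1" by (rule separating_card_outside_le_1[OF separating])
  moreover have "card ({1..n} - U) = n - card U"
    using \<open>U \<subseteq> {1..n}\<close> by (simp add: card_Diff_subset finite_subset)
  ultimately show ?thesis unfolding U_def by simp
qed

definition surplus :: "nat set \<Rightarrow> real" where
  "surplus X = real (card X) - (real (n div 2) - 1)"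

lemma surplus_top_pos: "0 < surplus {1..n}"
proof -
  have "real (n div 2) \<le> real n" by simp
  then show ?thesis unfolding surplus_def by simp
qed

lemma surplus_Un_ge_1:
  assumes "small S" "small T" "T \<noteq> S"
  shows "1 \<le> surplus (S \<union> T)"
proof -
  have "S \<union> T \<in> \<A>" using Un_mem[OF small_mem[OF assms(1)] small_mem[OF assms(2)]] .
  then have "n \<le> 2 * card (S \<union> T)" using Un_small_not_small[OF assms] unfolding small_def by simp
  then show ?thesis unfolding surplus_def by linarith
qed

text \<open>The sets \<open>Y - S\<close> over a fiber are pairwise disjoint subsets of \<open>S\<^sub>1\<close>, because any two
  members of the fiber already cover \<open>Y\<close>.\<close>
lemma sum_surplus_fiber_ge:
  assumes "small S\<^sub>1" and "finite \<G>" and "S\<^sub>0 \<in> \<G>"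
    and fiber: "\<And>S. S \<in> \<G> \<Longrightarrow> small S \<and> S \<noteq> S\<^sub>1 \<and> S\<^sub>1 \<union> S = Y"
  shows "surplus Y - real (card S\<^sub>1) \<le> (\<Sum>S\<in>\<G>. surplus S)"
proof -
  have Y: "Y = S\<^sub>1 \<union> S\<^sub>0" "small S\<^sub>0" "S\<^sub>0 \<noteq> S\<^sub>1" using fiber[OF assms(3)] by auto
  have "1 \<le> surplus Y" using surplus_Un_ge_1[OF assms(1) Y(2,3)] Y(1) by simp
  have "finite Y" using Y(1) finite_mem[OF small_mem[OF assms(1)]] finite_mem[OF small_mem[OF Y(2)]]
    by simp
  have surplus_eq: "surplus S = surplus Y - real (card (Y - S))" if "S \<in> \<G>" for S
  proof -
    have "S \<subseteq> Y" using fiber[OF that] by blast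
    then show ?thesis
      using \<open>finite Y\<close> card_mono[of Y S]
      by (simp add: surplus_def card_Diff_subset finite_subset)
  qed
  have "(Y - S) \<inter> (Y - S') = {}" if "S \<in> \<G>" "S' \<in> \<G>" "S \<noteq> S'" for S S'
    using Un_small_eq_Un[OF assms(1) _ _ that(3)] fiber[OF that(1)] fiber[OF that(2)] by blast
  then have "(\<Sum>S\<in>\<G>. card (Y - S)) = card (\<Union>S\<in>\<G>. Y - S)"
    using assms(2) \<open>finite Y\<close> by (intro card_UN_disjoint[symmetric]) auto
  also have "\<dots> \<le> card S\<^sub>1"
    using fiber finite_mem[OF small_mem[OF assms(1)]] by (intro card_mono) auto
  finally have diff: "(\<Sum>S\<in>\<G>. real (card (Y - S))) \<le> real (card S\<^sub>1)"
    by (simp flip: of_nat_sum)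
  have "1 \<le> card \<G>" using assms(2,3) by (metis One_nat_def Suc_leI card_gt_0_iff empty_iff)
  then have "surplus Y \<le> real (card \<G>) * surplus Y" using \<open>1 \<le> surplus Y\<close> by simp
  also have "\<dots> = (\<Sum>S\<in>\<G>. surplus S) + (\<Sum>S\<in>\<G>. real (card (Y - S)))"
    using surplus_eq by (simp add: sum_subtractf)
  finally show ?thesis using diff by linarith
qed

lemma surplus_pair_gt:
  assumes "small S\<^sub>1" "small S" "small S'" "S \<noteq> S\<^sub>1" "S' \<noteq> S\<^sub>1"
    and "S\<^sub>1 \<union> S \<noteq> S\<^sub>1 \<union> S'"
  shows "real (card S\<^sub>1) < surplus (S\<^sub>1 \<union> S) + surplus (S\<^sub>1 \<union> S')"
proof -
  let ?Y = "S\<^sub>1 \<union> S" and ?Y' = "S\<^sub>1 \<union> S'"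
  have fin: "finite ?Y" "finite ?Y'"
    using assms(1-3) small_mem finite_mem by blast+
  have "n \<le> card (?Y \<union> ?Y') + 1"
    using card_Un_small_pair_ge[OF assms] by (simp add: Un_ac)
  moreover have "card ?Y + card ?Y' = card (?Y \<union> ?Y') + card (?Y \<inter> ?Y')"
    using card_Un_Int[OF fin] .
  moreover have "card S\<^sub>1 \<le> card (?Y \<inter> ?Y')"
    using fin by (intro card_mono) auto
  moreover have "2 * (n div 2) \<le> n" by simp
  ultimately show ?thesis unfolding surplus_def by linarith
qed

text \<open>Grouping the small sets \<open>S\<close> by \<open>Y = S\<^sub>1 \<union> S\<close>, each group with its \<open>Y\<close> contributes at
  least \<open>2 surplus Y - |S\<^sub>1|\<close>, which is negative for at most one \<open>Y\<close>.\<close>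
lemma sum_surplus_unions_ge:
  assumes "small S\<^sub>1" and "finite \<D>" and \<D>: "\<And>S. S \<in> \<D> \<Longrightarrow> small S \<and> S \<noteq> S\<^sub>1"
  shows "min 0 (2 - real (card S\<^sub>1)) \<le> (\<Sum>Y\<in>(\<union>) S\<^sub>1 ` \<D>. surplus Y) + (\<Sum>S\<in>\<D>. surplus S)"
proof -
  let ?\<Y> = "(\<union>) S\<^sub>1 ` \<D>"
  let ?bound = "\<lambda>Y. 2 * surplus Y - real (card S\<^sub>1)"
  have "min 0 (2 - real (card S\<^sub>1)) \<le> sum ?bound ?\<Y>"
  proof (rule sum_ge_if_one_negative)
    show "finite ?\<Y>" using assms(2) by simp
  next
    fix Y assume "Y \<in> ?\<Y>"
    then obtain S where "S \<in> \<D>" "Y = S\<^sub>1 \<union> S" by blast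
    then have "1 \<le> surplus Y" using surplus_Un_ge_1[OF assms(1)] \<D> by blast
    then show "min 0 (2 - real (card S\<^sub>1)) \<le> ?bound Y" by simp
  next
    fix Y Y' assume "Y \<in> ?\<Y>" "Y' \<in> ?\<Y>" "?bound Y < 0" "?bound Y' < 0"
    then obtain S S' where "S \<in> \<D>" "S' \<in> \<D>" "Y = S\<^sub>1 \<union> S" "Y' = S\<^sub>1 \<union> S'"
      "real (card S\<^sub>1) \<ge> surplus Y + surplus Y'" by auto
    then show "Y = Y'" using surplus_pair_gt[OF assms(1)] \<D> by (meson not_less)
  qed simp
  also have "\<dots> \<le> (\<Sum>Y\<in>?\<Y>. surplus Y + (\<Sum>S\<in>{S \<in> \<D>. S\<^sub>1 \<union> S = Y}. surplus S))"
  proof (rule sum_mono)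
    fix Y assume "Y \<in> ?\<Y>"
    then obtain S\<^sub>0 where "S\<^sub>0 \<in> \<D>" "Y = S\<^sub>1 \<union> S\<^sub>0" by blast
    then have "surplus Y - real (card S\<^sub>1) \<le> (\<Sum>S\<in>{S \<in> \<D>. S\<^sub>1 \<union> S = Y}. surplus S)"
      using assms(2) \<D> by (intro sum_surplus_fiber_ge[OF assms(1), of _ S\<^sub>0]) auto
    then show "?bound Y \<le> surplus Y + (\<Sum>S\<in>{S \<in> \<D>. S\<^sub>1 \<union> S = Y}. surplus S)" by simp
  qed
  also have "\<dots> = (\<Sum>Y\<in>?\<Y>. surplus Y) + (\<Sum>S\<in>\<D>. surplus S)"
    using sum.image_gen[OF assms(2), of surplus "(\<union>) S\<^sub>1"] by (simp add: sum.distrib)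
  finally show ?thesis .
qed

lemma sum_surplus_pos: "0 < (\<Sum>X\<in>\<A>. surplus X)"
proof (cases "\<exists>S\<^sub>1\<in>\<A>. surplus S\<^sub>1 < 0")
  case False
  have "0 < surplus {1..n}" by (rule surplus_top_pos)
  also have "\<dots> \<le> (\<Sum>X\<in>\<A>. surplus X)"
    using False top_mem finite_family by (intro member_le_sum) (auto simp: not_less)
  finally show ?thesis .
next
  case True
  then obtain S\<^sub>1 where S\<^sub>1: "S\<^sub>1 \<in> \<A>" "surplus S\<^sub>1 < 0" by blast
  have negative_small: "small S" if "S \<in> \<A>" "surplus S < 0" for S
    using that unfolding small_def surplus_def by linarith
  define \<D> where "\<D> = {S \<in> \<A>. surplus S < 0} - {S\<^sub>1}"
  define \<Y> where "\<Y> = (\<union>) S\<^sub>1 ` \<D>"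
  have \<D>: "finite \<D>" "\<And>S. S \<in> \<D> \<Longrightarrow> small S \<and> S \<noteq> S\<^sub>1"
    unfolding \<D>_def using finite_family negative_small by auto
  have \<Y>: "Y \<in> \<A>" "1 \<le> surplus Y" "Y \<noteq> {1..n}" if Y: "Y \<in> \<Y>" for Y
  proof -
    obtain S where S: "S \<in> \<D>" "Y = S\<^sub>1 \<union> S" using Y unfolding \<Y>_def by blast
    note smalls = negative_small[OF S\<^sub>1] \<D>(2)[OF S(1)]
    show "Y \<in> \<A>" using S(2) Un_mem small_mem smalls by blast
    show "1 \<le> surplus Y" using S(2) surplus_Un_ge_1 smalls by blast
    show "Y \<noteq> {1..n}" using S(2) small_Un3_ne_top[of S\<^sub>1 S S] smalls by simp
  qed
  have disjoint: "{1..n} \<notin> insert S\<^sub>1 (\<Y> \<union> \<D>)" "S\<^sub>1 \<notin> \<Y> \<union> \<D>" "\<Y> \<inter> \<D> = {}"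
    using \<Y>(2,3) S\<^sub>1(2) surplus_top_pos unfolding \<D>_def by fastforce+
  have finite: "finite \<Y>" "finite \<D>" using \<D>(1) unfolding \<Y>_def by simp_all
  have "surplus {1..n} + surplus S\<^sub>1 + min 0 (2 - real (card S\<^sub>1))
      \<le> surplus {1..n} + (surplus S\<^sub>1 + ((\<Sum>Y\<in>\<Y>. surplus Y) + (\<Sum>S\<in>\<D>. surplus S)))"
    using sum_surplus_unions_ge[OF negative_small[OF S\<^sub>1] \<D>] unfolding \<Y>_def by simp
  also have "\<dots> = (\<Sum>X\<in>insert {1..n} (insert S\<^sub>1 (\<Y> \<union> \<D>)). surplus X)"
    using disjoint finite by (simp add: sum.union_disjoint)
  also have "\<dots> \<le> (\<Sum>X\<in>\<A>. surplus X)"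
    using finite_family top_mem S\<^sub>1(1) \<Y>(1) by (intro sum_mono2) (auto simp: \<D>_def)
  finally have "surplus {1..n} + surplus S\<^sub>1 + min 0 (2 - real (card S\<^sub>1)) \<le> (\<Sum>X\<in>\<A>. surplus X)" .
  moreover have "2 * (n div 2) \<le> n" by simp
  ultimately show ?thesis unfolding surplus_def min_def by (simp split: if_splits)
qed

end

theorem theorem4p1:
  fixes \<A> :: "nat set set" and n :: nat and \<B> :: "nat set set"
  assumes "union_closed \<A>"
    and "base \<A> = {1..n}"
    and "separating \<A> n"
    and "height \<A> = 4"
    and "is_BA \<A> n \<B>"
    and "card \<B> = 4"
  shows "avg \<A> > real (n div 2) - 1"
proof -
  interpret height_four_family \<A> n \<B> using assms by unfold_locales
  have "0 < (\<Sum>X\<in>\<A>. real (card X) - (real (n div 2) - 1))"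
    using sum_surplus_pos unfolding surplus_def .
  then show ?thesis using avg_gt_iff_sum_pos finite_family top_mem by blast
qed

end
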